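(* Let $X=(X_1,\dots,X_n)\sim\mathcal{D}$ be an arbitrary time-dependent Markov chain over $\Omega=\Omega_1\times\dots\times\Omega_n$ with each $\Omega_i$ finite. Then for any $\epsilon>0$ there is a $\Delta$-MRF distribution $\mathcal{D}_\mathcal{M}$ on $\Omega$ such that for every $\omega\in\Omega$, $$\Pr_{Y\sim\mathcal{D}_\mathcal{M}}[Y=\omega]\ge(1-\epsilon)\Pr_{X\sim\mathcal{D}}[X=\omega],$$ where $\Delta=O\big(\log\frac{n\cdot\max_i|\Omega_i|}{\epsilon}\big)$.
   Context: Time-dependent Markov chain: a random variable $X=(X_1,\dots,X_n)\in\Omega$ such that for every $\omega\in\Omega$ and every $i\ge2$, $\Pr[X_i=\omega_i\mid X_j=\omega_j\ \forall j<i]=\Pr[X_i=\omega_i\mid X_{i-1}=\omega_{i-1}]$. MRF: an MRF on $\Omega$ consists of a hypergraph edge set $E'\subseteq2^{[n]}$ and potentials $\psi_i:\Omega_i\to\mathbb{R}$, $\psi_e:\prod_{i\in e}\Omega_i\to\mathbb{R}$, defining $\Pr[Y=u]\propto\exp(\sum_i\psi_i(u_i)+\sum_{e}\psi_e((u_j)_{j\in e}))$; its weighted maximum degree is $\max_i\max_{u\in\Omega}|\sum_{e\ni i}\psi_e((u_j)_{j\in e})|$; a $\Delta$-MRF distribution is one arising from an MRF whose weighted maximum degree is $\Delta$. *)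

theory Defs
  imports Complex_Main "HOL-Library.FuncSet"
begin

text \<open>Coordinates are indexed by 0..n-1. The state space is
  Omega = PiE {..<n} Om. A distribution on it is a probability mass function
  p on PiE {..<n} Om.\<close>

definition is_distribution :: "nat \<Rightarrow> (nat \<Rightarrow> 'a set) \<Rightarrow> ((nat \<Rightarrow> 'a) \<Rightarrow> real) \<Rightarrow> bool" where
  "is_distribution n Om p \<longleftrightarrow>
     (\<forall>u\<in>PiE {..<n} Om. 0 \<le> p u) \<and> (\<Sum>u\<in>PiE {..<n} Om. p u) = 1"

definition prob_ev :: "nat \<Rightarrow> (nat \<Rightarrow> 'a set) \<Rightarrow> ((nat \<Rightarrow> 'a) \<Rightarrow> real) \<Rightarrow> ((nat \<Rightarrow> 'a) \<Rightarrow> bool) \<Rightarrow> real" where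
  "prob_ev n Om p P = (\<Sum>u\<in>{u\<in>PiE {..<n} Om. P u}. p u)"

text \<open>Time-dependent Markov chain: for every w in Omega and every 1 \<le> i < n,
  Pr[X_i = w_i | X_j = w_j for all j<i] = Pr[X_i = w_i | X_(i-1) = w_(i-1)],
  written in multiplied-out form (so that zero-probability conditioning events
  impose no constraint).\<close>
definition time_dep_markov_chain :: "nat \<Rightarrow> (nat \<Rightarrow> 'a set) \<Rightarrow> ((nat \<Rightarrow> 'a) \<Rightarrow> real) \<Rightarrow> bool" where
  "time_dep_markov_chain n Om p \<longleftrightarrow> is_distribution n Om p \<and>
     (\<forall>w\<in>PiE {..<n} Om. \<forall>i. 1 \<le> i \<and> i < n \<longrightarrow>
        prob_ev n Om p (\<lambda>u. \<forall>j\<le>i. u j = w j) * prob_ev n Om p (\<lambda>u. u (i - 1) = w (i - 1))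
        = prob_ev n Om p (\<lambda>u. \<forall>j<i. u j = w j) *
          prob_ev n Om p (\<lambda>u. u (i - 1) = w (i - 1) \<and> u i = w i))"

definition mrf_score :: "nat \<Rightarrow> nat set set \<Rightarrow> (nat \<Rightarrow> 'a \<Rightarrow> real) \<Rightarrow> (nat set \<Rightarrow> (nat \<Rightarrow> 'a) \<Rightarrow> real) \<Rightarrow> (nat \<Rightarrow> 'a) \<Rightarrow> real" where
  "mrf_score n E psiV psiE u = (\<Sum>i<n. psiV i (u i)) + (\<Sum>e\<in>E. psiE e (restrict u e))"

definition mrf_dist :: "nat \<Rightarrow> (nat \<Rightarrow> 'a set) \<Rightarrow> nat set set \<Rightarrow> (nat \<Rightarrow> 'a \<Rightarrow> real) \<Rightarrow> (nat set \<Rightarrow> (nat \<Rightarrow> 'a) \<Rightarrow> real) \<Rightarrow> (nat \<Rightarrow> 'a) \<Rightarrow> real" where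
  "mrf_dist n Om E psiV psiE u =
     exp (mrf_score n E psiV psiE u) / (\<Sum>v\<in>PiE {..<n} Om. exp (mrf_score n E psiV psiE v))"

definition weighted_max_degree :: "nat \<Rightarrow> (nat \<Rightarrow> 'a set) \<Rightarrow> nat set set \<Rightarrow> (nat set \<Rightarrow> (nat \<Rightarrow> 'a) \<Rightarrow> real) \<Rightarrow> real" where
  "weighted_max_degree n Om E psiE =
     Max {\<bar>\<Sum>e\<in>{e\<in>E. i \<in> e}. psiE e (restrict u e)\<bar> | i u. i < n \<and> u \<in> PiE {..<n} Om}"

definition is_Delta_MRF_dist :: "nat \<Rightarrow> (nat \<Rightarrow> 'a set) \<Rightarrow> real \<Rightarrow> ((nat \<Rightarrow> 'a) \<Rightarrow> real) \<Rightarrow> bool" where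
  "is_Delta_MRF_dist n Om \<Delta> q \<longleftrightarrow>
     (\<exists>E psiV psiE. E \<subseteq> Pow {..<n} \<and>
        weighted_max_degree n Om E psiE = \<Delta> \<and>
        (\<forall>u\<in>PiE {..<n} Om. q u = mrf_dist n Om E psiV psiE u))"

end

theory Submission
  imports Defs
begin

text \<open>By the Markov property \<open>p\<close> factorises as the product of its transition
  probabilities \<open>T i (w (i - 1)) (w i)\<close>. Replacing each \<open>T i\<close> by \<open>max (T i) d\<close> with
  \<open>d = \<epsilon> / (n k)\<close>, where \<open>k\<close> is the largest alphabet size, gives a path-shaped MRF whose
  unnormalised weight dominates \<open>p\<close>. Every row of the smoothed kernel sums to at most \<open>1 + k d\<close>,
  so the partition function is at most \<open>(1 + k d)\<^sup>n \<le> exp \<epsilon>\<close> and the MRF probabilities are at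
  least \<open>exp (- \<epsilon>) \<ge> 1 - \<epsilon>\<close> times those of \<open>p\<close>. All potentials are logarithms of numbers in
  \<open>[d, 1]\<close> and every vertex lies on at most two edges, so the weighted degree is at most
  \<open>2 ln (n k / \<epsilon>)\<close>.\<close>

lemma finite_PiE_lessThan: "\<forall>i<n. finite (Om i) \<Longrightarrow> finite (PiE {..<n::nat} Om)"
  by (rule finite_PiE) auto

lemma prob_ev_nonneg: "is_distribution n Om p \<Longrightarrow> 0 \<le> prob_ev n Om p P"
  unfolding prob_ev_def is_distribution_def by (intro sum_nonneg) auto

lemma prob_ev_mono:
  assumes "is_distribution n Om p" "\<forall>i<n. finite (Om i)"
    and "\<And>u. u \<in> PiE {..<n} Om \<Longrightarrow> P u \<Longrightarrow> Q u"
  shows "prob_ev n Om p P \<le> prob_ev n Om p Q"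
  unfolding prob_ev_def using assms
  by (intro sum_mono2) (auto simp: is_distribution_def dest: finite_PiE_lessThan)

lemma prob_ev_le_1:
  assumes "is_distribution n Om p" "\<forall>i<n. finite (Om i)"
  shows "prob_ev n Om p P \<le> 1"
proof -
  have "prob_ev n Om p P \<le> prob_ev n Om p (\<lambda>_. True)"
    using assms by (intro prob_ev_mono) auto
  also have "\<dots> = 1"
    using assms(1) by (simp add: prob_ev_def is_distribution_def)
  finally show ?thesis .
qed

lemma sum_prob_ev_coordinate:
  assumes "\<forall>i<n. finite (Om i)" "i < n"
  shows "(\<Sum>b\<in>Om i. prob_ev n Om p (\<lambda>u. P u \<and> u i = b)) = prob_ev n Om p P"
proof -
  have "finite {u \<in> PiE {..<n} Om. P u}"
    using finite_PiE_lessThan[OF assms(1)] by simp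
  moreover have "(\<lambda>u. u i) ` {u \<in> PiE {..<n} Om. P u} \<subseteq> Om i"
    using assms(2) by (auto simp: PiE_mem)
  ultimately show ?thesis
    using assms(1,2) unfolding prob_ev_def
    by (subst sum.group[symmetric, where g = "\<lambda>u. u i"]) (auto intro!: sum.cong)
qed

text \<open>A conditioning event of probability 0 yields transition probability 0, as \<open>x / 0 = 0\<close>;
  this keeps the factorisation of \<open>p\<close> exact.\<close>
definition transition_prob ::
    "nat \<Rightarrow> (nat \<Rightarrow> 'a set) \<Rightarrow> ((nat \<Rightarrow> 'a) \<Rightarrow> real) \<Rightarrow> nat \<Rightarrow> 'a \<Rightarrow> 'a \<Rightarrow> real" where
  "transition_prob n Om p i a b =
     (if i = 0 then prob_ev n Om p (\<lambda>u. u 0 = b)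
      else prob_ev n Om p (\<lambda>u. u (i - 1) = a \<and> u i = b) / prob_ev n Om p (\<lambda>u. u (i - 1) = a))"

lemma transition_prob_nonneg: "is_distribution n Om p \<Longrightarrow> 0 \<le> transition_prob n Om p i a b"
  unfolding transition_prob_def by (auto intro!: divide_nonneg_nonneg prob_ev_nonneg)

lemma transition_prob_le_1:
  assumes "is_distribution n Om p" "\<forall>i<n. finite (Om i)"
  shows "transition_prob n Om p i a b \<le> 1"
proof (cases "i = 0")
  case True
  then show ?thesis using prob_ev_le_1[OF assms] by (simp add: transition_prob_def)
next
  case False
  let ?D = "prob_ev n Om p (\<lambda>u. u (i - 1) = a)"
  have "prob_ev n Om p (\<lambda>u. u (i - 1) = a \<and> u i = b) / ?D \<le> ?D / ?D"
    using assms prob_ev_nonneg[OF assms(1)] by (intro divide_right_mono prob_ev_mono) auto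
  also have "\<dots> \<le> 1" by (cases "?D = 0") auto
  finally show ?thesis using False by (simp add: transition_prob_def)
qed

lemma sum_transition_prob_le_1:
  assumes "is_distribution n Om p" "\<forall>i<n. finite (Om i)" "i < n"
  shows "(\<Sum>b\<in>Om i. transition_prob n Om p i a b) \<le> 1"
proof (cases "i = 0")
  case True
  then have "(\<Sum>b\<in>Om i. transition_prob n Om p i a b) = prob_ev n Om p (\<lambda>_. True)"
    using sum_prob_ev_coordinate[OF assms(2,3), of p "\<lambda>_. True"] by (simp add: transition_prob_def)
  then show ?thesis using prob_ev_le_1[OF assms(1,2)] by simp
next
  case False
  let ?D = "prob_ev n Om p (\<lambda>u. u (i - 1) = a)"
  have "(\<Sum>b\<in>Om i. transition_prob n Om p i a b)
      = (\<Sum>b\<in>Om i. prob_ev n Om p (\<lambda>u. u (i - 1) = a \<and> u i = b)) / ?D"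
    using False by (simp add: transition_prob_def sum_divide_distrib)
  also have "\<dots> = ?D / ?D"
    by (simp only: sum_prob_ev_coordinate[OF assms(2,3)])
  also have "\<dots> \<le> 1" by (cases "?D = 0") auto
  finally show ?thesis .
qed

text \<open>The factor for \<open>i = 0\<close> is \<open>h 0 (u 0) (u 0)\<close>, since \<open>0 - 1 = 0\<close> on naturals.\<close>
definition chain_weight :: "nat \<Rightarrow> (nat \<Rightarrow> 'a \<Rightarrow> 'a \<Rightarrow> real) \<Rightarrow> (nat \<Rightarrow> 'a) \<Rightarrow> real" where
  "chain_weight n h u = (\<Prod>i<n. h i (u (i - 1)) (u i))"

lemma time_dep_markov_chainD:
  assumes "time_dep_markov_chain n Om p" "w \<in> PiE {..<n} Om" "1 \<le> i" "i < n"
  shows "prob_ev n Om p (\<lambda>u. \<forall>j\<le>i. u j = w j) * prob_ev n Om p (\<lambda>u. u (i - 1) = w (i - 1))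
    = prob_ev n Om p (\<lambda>u. \<forall>j<i. u j = w j) * prob_ev n Om p (\<lambda>u. u (i - 1) = w (i - 1) \<and> u i = w i)"
  using assms unfolding time_dep_markov_chain_def by blast

lemma prob_ev_prefix_eq_prod_transition_prob:
  assumes mc: "time_dep_markov_chain n Om p" and fin: "\<forall>i<n. finite (Om i)"
    and w: "w \<in> PiE {..<n} Om"
  shows "i \<le> n \<Longrightarrow>
    prob_ev n Om p (\<lambda>u. \<forall>j<i. u j = w j) = (\<Prod>j<i. transition_prob n Om p j (w (j - 1)) (w j))"
proof (induction i)
  case 0
  from mc show ?case by (simp add: time_dep_markov_chain_def is_distribution_def prob_ev_def)
next
  case (Suc i)
  have dist: "is_distribution n Om p" using mc by (simp add: time_dep_markov_chain_def)
  let ?A = "prob_ev n Om p (\<lambda>u. \<forall>j<i. u j = w j)"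
  let ?P = "prob_ev n Om p (\<lambda>u. \<forall>j<Suc i. u j = w j)"
  let ?D = "prob_ev n Om p (\<lambda>u. u (i - 1) = w (i - 1))"
  let ?N = "prob_ev n Om p (\<lambda>u. u (i - 1) = w (i - 1) \<and> u i = w i)"
  let ?T = "transition_prob n Om p i (w (i - 1)) (w i)"
  have "?P = ?A * ?T"
  proof (cases "i = 0")
    case True
    with dist show ?thesis by (simp add: transition_prob_def prob_ev_def is_distribution_def)
  next
    case False
    have prefix_Suc: "(\<lambda>u. \<forall>j<Suc i. u j = w j) = (\<lambda>u. \<forall>j\<le>i. u j = w j)"
      by (simp add: less_Suc_eq_le)
    have markov: "?P * ?D = ?A * ?N"
      unfolding prefix_Suc using time_dep_markov_chainD[OF mc w] False Suc.prems by simp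
    show ?thesis
    proof (cases "?D = 0")
      case True
      have "?P \<le> ?D"
        using dist fin False by (intro prob_ev_mono) auto
      with True prob_ev_nonneg[OF dist] have "?P = 0"
        by (simp add: eq_iff)
      with True \<open>i \<noteq> 0\<close> show ?thesis
        by (simp add: transition_prob_def)
    next
      case False
      with markov \<open>i \<noteq> 0\<close> show ?thesis
        by (simp add: transition_prob_def eq_divide_eq)
    qed
  qed
  with Suc show ?case by simp
qed

theorem time_dep_markov_chain_factorization:
  assumes "time_dep_markov_chain n Om p" "\<forall>i<n. finite (Om i)" and w: "w \<in> PiE {..<n} Om"
  shows "p w = chain_weight n (transition_prob n Om p) w"
proof -
  have "{u \<in> PiE {..<n} Om. \<forall>j<n. u j = w j} = {w}"
    using w by (auto intro: PiE_ext)
  then have "p w = prob_ev n Om p (\<lambda>u. \<forall>j<n. u j = w j)"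
    by (simp add: prob_ev_def)
  also have "\<dots> = chain_weight n (transition_prob n Om p) w"
    unfolding chain_weight_def using prob_ev_prefix_eq_prod_transition_prob[OF assms] by simp
  finally show ?thesis .
qed

lemma sum_PiE_lessThan_Suc:
  assumes "\<forall>i<Suc n. finite (Om i)"
  shows "(\<Sum>u\<in>PiE {..<Suc n} Om. f u) = (\<Sum>b\<in>Om n. \<Sum>g\<in>PiE {..<n} Om. f (g(n := b)))"
proof -
  have "(\<Sum>u\<in>PiE {..<Suc n} Om. f u) = (\<Sum>u\<in>(\<lambda>(b, g). g(n := b)) ` (Om n \<times> PiE {..<n} Om). f u)"
    by (simp add: lessThan_Suc PiE_insert_eq)
  also have "\<dots> = (\<Sum>(b, g)\<in>Om n \<times> PiE {..<n} Om. f (g(n := b)))"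
    by (subst sum.reindex) (auto simp: inj_combinator case_prod_beta)
  also have "\<dots> = (\<Sum>b\<in>Om n. \<Sum>g\<in>PiE {..<n} Om. f (g(n := b)))"
    by (simp add: sum.cartesian_product)
  finally show ?thesis .
qed

lemma chain_weight_fun_upd:
  "chain_weight (Suc n) h (g(n := b)) = chain_weight n h g * h n ((g(n := b)) (n - 1)) b"
proof -
  have "(\<Prod>i<n. h i ((g(n := b)) (i - 1)) ((g(n := b)) i)) = chain_weight n h g"
    unfolding chain_weight_def by (intro prod.cong) auto
  then show ?thesis by (simp add: chain_weight_def)
qed

lemma sum_chain_weight_le:
  assumes fin: "\<forall>i<n. finite (Om i)" and nonneg: "\<And>i a b. 0 \<le> h i a b"
    and row: "\<And>i a. i < n \<Longrightarrow> (\<Sum>b\<in>Om i. h i a b) \<le> B"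
    and initial: "\<And>a a' b. h 0 a b = h 0 a' b"
  shows "(\<Sum>u\<in>PiE {..<n} Om. chain_weight n h u) \<le> B ^ n"
  using fin row
proof (induction n)
  case 0
  then show ?case by (simp add: chain_weight_def)
next
  case (Suc n)
  have last_row: "(\<Sum>b\<in>Om n. h n ((g(n := b)) (n - 1)) b) \<le> B" for g
  proof -
    have "h n ((g(n := b)) (n - 1)) b = h n (g (n - 1)) b" for b
      using initial by (cases "n = 0") auto
    then show ?thesis using Suc.prems(2)[of n "g (n - 1)"] by simp
  qed
  have B_nonneg: "0 \<le> B"
    using Suc.prems(2)[of n undefined] sum_nonneg[of "Om n" "h n undefined"] nonneg by force
  have "(\<Sum>u\<in>PiE {..<Suc n} Om. chain_weight (Suc n) h u)
      = (\<Sum>g\<in>PiE {..<n} Om. chain_weight n h g * (\<Sum>b\<in>Om n. h n ((g(n := b)) (n - 1)) b))"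
    using Suc.prems(1)
    by (simp add: sum_PiE_lessThan_Suc chain_weight_fun_upd sum.swap[of _ "Om n"] sum_distrib_left)
  also have "\<dots> \<le> (\<Sum>g\<in>PiE {..<n} Om. chain_weight n h g) * B"
    unfolding sum_distrib_right using last_row nonneg
    by (intro sum_mono mult_left_mono) (auto simp: chain_weight_def prod_nonneg)
  also have "\<dots> \<le> B ^ n * B"
    using Suc B_nonneg by (intro mult_right_mono) auto
  finally show ?case by (simp add: mult.commute)
qed

lemma sum_chain_weight_smoothed_le:
  assumes dist: "is_distribution n Om p" and fin: "\<forall>i<n. finite (Om i)"
    and card: "\<And>i. i < n \<Longrightarrow> card (Om i) \<le> k" and "0 \<le> d"
  shows "(\<Sum>u\<in>PiE {..<n} Om. chain_weight n (\<lambda>i a b. max (transition_prob n Om p i a b) d) u)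
    \<le> exp (real n * real k * d)"
proof -
  have "(\<Sum>u\<in>PiE {..<n} Om. chain_weight n (\<lambda>i a b. max (transition_prob n Om p i a b) d) u)
      \<le> (1 + real k * d) ^ n"
  proof (rule sum_chain_weight_le[OF fin])
    fix i a assume i: "i < n"
    have "(\<Sum>b\<in>Om i. max (transition_prob n Om p i a b) d) \<le> (\<Sum>b\<in>Om i. transition_prob n Om p i a b + d)"
      using transition_prob_nonneg[OF dist] \<open>0 \<le> d\<close> by (intro sum_mono) simp
    also have "\<dots> = (\<Sum>b\<in>Om i. transition_prob n Om p i a b) + real (card (Om i)) * d"
      by (simp add: sum.distrib)
    also have "\<dots> \<le> 1 + real k * d"
      using sum_transition_prob_le_1[OF dist fin i] card[OF i] \<open>0 \<le> d\<close>
      by (intro add_mono mult_right_mono) auto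
    finally show "(\<Sum>b\<in>Om i. max (transition_prob n Om p i a b) d) \<le> 1 + real k * d" .
  qed (auto simp: transition_prob_def \<open>0 \<le> d\<close> max.coboundedI2)
  also have "\<dots> \<le> exp (real k * d) ^ n"
    using \<open>0 \<le> d\<close> by (intro power_mono) auto
  also have "\<dots> = exp (real n * real k * d)"
    by (simp add: exp_of_nat_mult[symmetric] mult.assoc)
  finally show ?thesis .
qed

definition path_edges :: "nat \<Rightarrow> nat set set" where
  "path_edges n = (\<lambda>i. {i - 1, i}) ` {1..<n}"

definition chain_vertex_potential :: "(nat \<Rightarrow> 'a \<Rightarrow> 'a \<Rightarrow> real) \<Rightarrow> nat \<Rightarrow> 'a \<Rightarrow> real" where
  "chain_vertex_potential h i x = (if i = 0 then ln (h 0 x x) else 0)"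

text \<open>The edge \<open>{i - 1, i}\<close> is recovered from its maximum \<open>i\<close>.\<close>
definition chain_edge_potential :: "(nat \<Rightarrow> 'a \<Rightarrow> 'a \<Rightarrow> real) \<Rightarrow> nat set \<Rightarrow> (nat \<Rightarrow> 'a) \<Rightarrow> real" where
  "chain_edge_potential h e v = ln (h (Max e) (v (Max e - 1)) (v (Max e)))"

lemma path_edges_subset_Pow: "path_edges n \<subseteq> Pow {..<n}"
  by (auto simp: path_edges_def)

lemma inj_on_path_edge: "inj_on (\<lambda>i::nat. {i - 1, i}) {1..<n}"
proof (rule inj_onI)
  fix i j :: nat assume "i \<in> {1..<n}" "j \<in> {1..<n}" "{i - 1, i} = {j - 1, j}"
  then have "Max {i - 1, i} = Max {j - 1, j}" by simp
  with \<open>i \<in> {1..<n}\<close> \<open>j \<in> {1..<n}\<close> show "i = j" by simp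
qed

lemma sum_path_edges:
  "(\<Sum>e\<in>path_edges n. chain_edge_potential h e (restrict u e)) = (\<Sum>i\<in>{1..<n}. ln (h i (u (i - 1)) (u i)))"
  unfolding path_edges_def
  by (subst sum.reindex[OF inj_on_path_edge]) (auto intro!: sum.cong simp: chain_edge_potential_def)

lemma exp_mrf_score_chain:
  assumes pos: "\<And>i a b. 0 < h i a b"
  shows "exp (mrf_score n (path_edges n) (chain_vertex_potential h) (chain_edge_potential h) u)
    = chain_weight n h u"
proof (cases "n = 0")
  case True
  then show ?thesis by (simp add: mrf_score_def path_edges_def chain_weight_def)
next
  case False
  then have "{..<n} = insert 0 {1..<n}" by auto
  moreover have "(\<Sum>i<n. chain_vertex_potential h i (u i)) = ln (h 0 (u 0) (u 0))"
    using False by (simp add: chain_vertex_potential_def)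
  ultimately have "mrf_score n (path_edges n) (chain_vertex_potential h) (chain_edge_potential h) u
      = (\<Sum>i<n. ln (h i (u (i - 1)) (u i)))"
    by (simp add: mrf_score_def sum_path_edges)
  then show ?thesis
    using pos by (simp add: exp_sum chain_weight_def)
qed

lemma mrf_dist_chain:
  assumes "\<And>i a b. 0 < h i a b"
  shows "mrf_dist n Om (path_edges n) (chain_vertex_potential h) (chain_edge_potential h) u
    = chain_weight n h u / (\<Sum>v\<in>PiE {..<n} Om. chain_weight n h v)"
  using assms by (simp add: mrf_dist_def exp_mrf_score_chain)

lemma weighted_max_degree_le:
  assumes "0 < n" and Om: "\<forall>i<n. finite (Om i) \<and> Om i \<noteq> {}"
    and card: "\<And>i. i < n \<Longrightarrow> card {e \<in> E. i \<in> e} \<le> m"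
    and bound: "\<And>e v. \<bar>psiE e v\<bar> \<le> L"
  shows "weighted_max_degree n Om E psiE \<le> m * L"
  unfolding weighted_max_degree_def
proof (rule Max.boundedI)
  let ?deg = "\<lambda>(i, u). \<bar>\<Sum>e\<in>{e \<in> E. i \<in> e}. psiE e (restrict u e)\<bar>"
  have "{\<bar>\<Sum>e\<in>{e \<in> E. i \<in> e}. psiE e (restrict u e)\<bar> | i u. i < n \<and> u \<in> PiE {..<n} Om}
      = ?deg ` ({..<n} \<times> PiE {..<n} Om)"
    by auto
  moreover have "finite (PiE {..<n} Om)" "PiE {..<n} Om \<noteq> {}"
    using Om finite_PiE_lessThan by (auto simp: PiE_eq_empty_iff)
  ultimately show "finite {\<bar>\<Sum>e\<in>{e \<in> E. i \<in> e}. psiE e (restrict u e)\<bar> | i u. i < n \<and> u \<in> PiE {..<n} Om}"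
    and "{\<bar>\<Sum>e\<in>{e \<in> E. i \<in> e}. psiE e (restrict u e)\<bar> | i u. i < n \<and> u \<in> PiE {..<n} Om} \<noteq> {}"
    using \<open>0 < n\<close> by auto
next
  fix x assume "x \<in> {\<bar>\<Sum>e\<in>{e \<in> E. i \<in> e}. psiE e (restrict u e)\<bar> | i u. i < n \<and> u \<in> PiE {..<n} Om}"
  then obtain i u where i: "i < n" and x: "x = \<bar>\<Sum>e\<in>{e \<in> E. i \<in> e}. psiE e (restrict u e)\<bar>"
    by auto
  have "0 \<le> L" using bound[of undefined undefined] by linarith
  have "x \<le> (\<Sum>e\<in>{e \<in> E. i \<in> e}. \<bar>psiE e (restrict u e)\<bar>)"
    unfolding x by (rule sum_abs)
  also have "\<dots> \<le> real (card {e \<in> E. i \<in> e}) * L"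
    using bound by (intro sum_bounded_above)
  also have "\<dots> \<le> m * L"
    using card[OF i] \<open>0 \<le> L\<close> by (intro mult_right_mono) auto
  finally show "x \<le> m * L" .
qed

lemma card_path_edges_containing: "card {e \<in> path_edges n. i \<in> e} \<le> 2"
proof -
  have "card {e \<in> path_edges n. i \<in> e} \<le> card {{i - 1, i}, {i, i + 1}}"
    by (intro card_mono) (auto simp: path_edges_def)
  also have "\<dots> \<le> 2"
    by (simp add: card_insert_if)
  finally show ?thesis .
qed

lemma weighted_max_degree_chain_le:
  assumes "0 < n" "\<forall>i<n. finite (Om i) \<and> Om i \<noteq> {}"
    and "0 < d" and lower: "\<And>i a b. d \<le> h i a b" and upper: "\<And>i a b. h i a b \<le> 1"
  shows "weighted_max_degree n Om (path_edges n) (chain_edge_potential h) \<le> 2 * ln (1 / d)"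
proof -
  have "\<bar>chain_edge_potential h e v\<bar> \<le> ln (1 / d)" for e v
  proof -
    let ?x = "h (Max e) (v (Max e - 1)) (v (Max e))"
    have "d \<le> ?x" "?x \<le> 1" by (fact lower upper)+
    then have "ln d \<le> ln ?x" "ln ?x \<le> 0"
      using \<open>0 < d\<close> by auto
    then show ?thesis
      using \<open>0 < d\<close> by (simp add: chain_edge_potential_def ln_div)
  qed
  then show ?thesis
    using weighted_max_degree_le[OF assms(1,2) card_path_edges_containing] by simp
qed

lemma one_minus_mult_le_divide:
  fixes x y Z \<epsilon> :: real
  assumes "0 \<le> x" "x \<le> y" "0 < Z" "Z \<le> exp \<epsilon>"
  shows "(1 - \<epsilon>) * x \<le> y / Z"
proof -
  have "(1 - \<epsilon>) * x \<le> exp (- \<epsilon>) * x"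
    using exp_ge_add_one_self[of "- \<epsilon>"] \<open>0 \<le> x\<close> by (intro mult_right_mono) auto
  also have "\<dots> \<le> x / Z"
    using assms by (simp add: exp_minus divide_inverse mult.commute mult_left_mono)
  also have "\<dots> \<le> y / Z"
    using assms by (simp add: divide_right_mono)
  finally show ?thesis .
qed

lemma markov_chain_smoothed_path_mrf:
  assumes mc: "time_dep_markov_chain n Om p" and "0 < n"
    and Om: "\<forall>i<n. finite (Om i) \<and> Om i \<noteq> {}"
    and card: "\<And>i. i < n \<Longrightarrow> card (Om i) \<le> k" and "0 < d" "d \<le> 1"
  shows "\<exists>\<Delta> q. is_Delta_MRF_dist n Om \<Delta> q \<and> \<Delta> \<le> 2 * ln (1 / d) \<and>
           (\<forall>w\<in>PiE {..<n} Om. (1 - real n * real k * d) * p w \<le> q w)"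
proof -
  have fin: "\<forall>i<n. finite (Om i)" and dist: "is_distribution n Om p"
    using Om mc by (auto simp: time_dep_markov_chain_def)
  define h where "h = (\<lambda>i a b. max (transition_prob n Om p i a b) d)"
  have h_pos: "0 < h i a b" for i a b
    using \<open>0 < d\<close> by (simp add: h_def max.strict_coboundedI2)
  have weight_pos: "0 < chain_weight n h u" for u
    unfolding chain_weight_def using h_pos by (intro prod_pos) auto
  let ?Z = "\<Sum>v\<in>PiE {..<n} Om. chain_weight n h v"
  have "0 < ?Z"
    using weight_pos finite_PiE_lessThan[OF fin] Om by (intro sum_pos) (auto simp: PiE_eq_empty_iff)
  have "?Z \<le> exp (real n * real k * d)"
    unfolding h_def using sum_chain_weight_smoothed_le[OF dist fin card] \<open>0 < d\<close> by simp
  let ?E = "path_edges n" and ?psiV = "chain_vertex_potential h" and ?psiE = "chain_edge_potential h"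
  show ?thesis
  proof (intro exI conjI ballI)
    show "is_Delta_MRF_dist n Om (weighted_max_degree n Om ?E ?psiE) (mrf_dist n Om ?E ?psiV ?psiE)"
      unfolding is_Delta_MRF_dist_def using path_edges_subset_Pow by blast
    show "weighted_max_degree n Om ?E ?psiE \<le> 2 * ln (1 / d)"
      using \<open>0 < n\<close> Om \<open>0 < d\<close> \<open>d \<le> 1\<close> transition_prob_le_1[OF dist fin]
      by (intro weighted_max_degree_chain_le) (auto simp: h_def)
  next
    fix w assume w: "w \<in> PiE {..<n} Om"
    have "p w = chain_weight n (transition_prob n Om p) w"
      using time_dep_markov_chain_factorization[OF mc fin w] .
    also have "\<dots> \<le> chain_weight n h w"
      unfolding chain_weight_def h_def using transition_prob_nonneg[OF dist]
      by (intro prod_mono) auto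
    finally have "p w \<le> chain_weight n h w" .
    with dist w \<open>0 < ?Z\<close> \<open>?Z \<le> exp (real n * real k * d)\<close>
    show "(1 - real n * real k * d) * p w \<le> mrf_dist n Om ?E ?psiV ?psiE w"
      unfolding mrf_dist_chain[OF h_pos]
      by (intro one_minus_mult_le_divide) (auto simp: is_distribution_def)
  qed
qed

theorem lemma5p2:
  "\<exists>C::real. C > 0 \<and>
     (\<forall>(n::nat) (Om::nat \<Rightarrow> 'a set) (p::(nat \<Rightarrow> 'a) \<Rightarrow> real) (\<epsilon>::real).
        n \<ge> 1 \<longrightarrow> (\<forall>i<n. finite (Om i) \<and> Om i \<noteq> {}) \<longrightarrow>
        time_dep_markov_chain n Om p \<longrightarrow> 0 < \<epsilon> \<longrightarrow> \<epsilon> < 1 \<longrightarrow>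
        (\<exists>\<Delta> q. is_Delta_MRF_dist n Om \<Delta> q \<and>
           \<Delta> \<le> C * ln (real n * real (Max ((\<lambda>i. card (Om i)) ` {..<n})) / \<epsilon>) \<and>
           (\<forall>w\<in>PiE {..<n} Om. q w \<ge> (1 - \<epsilon>) * p w)))"
proof (rule exI[of _ 2], intro conjI allI impI)
  fix n :: nat and Om :: "nat \<Rightarrow> 'a set" and p :: "(nat \<Rightarrow> 'a) \<Rightarrow> real" and \<epsilon> :: real
  assume "n \<ge> 1" and Om: "\<forall>i<n. finite (Om i) \<and> Om i \<noteq> {}"
    and mc: "time_dep_markov_chain n Om p" and "0 < \<epsilon>" "\<epsilon> < 1"
  define k where "k = Max ((\<lambda>i. card (Om i)) ` {..<n})"
  have card: "card (Om i) \<le> k" if "i < n" for i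
    unfolding k_def using that by (intro Max_ge) auto
  have "0 < card (Om 0)"
    using Om \<open>n \<ge> 1\<close> by (simp add: card_gt_0_iff)
  with card[of 0] \<open>n \<ge> 1\<close> have "1 \<le> k" by simp
  then have "1 \<le> real n * real k"
    using \<open>n \<ge> 1\<close> mult_mono[of 1 "real n" 1 "real k"] by simp
  define d where "d = \<epsilon> / (real n * real k)"
  have "0 < d" "d \<le> 1" and nkd: "real n * real k * d = \<epsilon>" and inv_d: "1 / d = real n * real k / \<epsilon>"
    using \<open>n \<ge> 1\<close> \<open>1 \<le> k\<close> \<open>0 < \<epsilon>\<close> \<open>\<epsilon> < 1\<close> \<open>1 \<le> real n * real k\<close> by (auto simp: d_def divide_le_eq)
  with markov_chain_smoothed_path_mrf[OF mc _ Om card] \<open>n \<ge> 1\<close>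
  show "\<exists>\<Delta> q. is_Delta_MRF_dist n Om \<Delta> q \<and>
           \<Delta> \<le> 2 * ln (real n * real (Max ((\<lambda>i. card (Om i)) ` {..<n})) / \<epsilon>) \<and>
           (\<forall>w\<in>PiE {..<n} Om. q w \<ge> (1 - \<epsilon>) * p w)"
    unfolding k_def[symmetric] inv_d[symmetric] nkd[symmetric] by simp
qed simp

end
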